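(* Let $\mathfrak m$ be an infinite cardinal with $\sup\{\mathfrak m^{\mathfrak n}:\mathfrak n<\mathfrak m\}=\mathfrak m$, and let $G$ be a subgroup of $\mathrm{Iso}(\mathbb U_{\mathfrak m})$ of density $<\mathfrak m$. Then the sets $V[x;\varepsilon]\cap G$, where $x\in\mathbb U_{\mathfrak m}$ and $\varepsilon>0$, form a neighbourhood base at the identity of $G$.
   Context: For an infinite cardinal $\mathfrak m$ satisfying $\sup\{\mathfrak m^{\mathfrak n}:\mathfrak n<\mathfrak m\}=\mathfrak m$, $\mathbb U_{\mathfrak m}$ denotes the Urysohn–Katětov space of weight $\mathfrak m$: the (unique up to isometry) complete metric space of density $\mathfrak m$ that contains an isometric copy of every metric space of weight $\le\mathfrak m$ and is $\mathfrak m$-homogeneous (every isometry between two subsets of cardinality $<\mathfrak m$ extends to an isometry of $\mathbb U_{\mathfrak m}$ onto itself). $\mathrm{Iso}(\mathbb U_{\mathfrak m})$ is its isometry group with the topology of pointwise convergence, and $V[x;\varepsilon]=\{g\in\mathrm{Iso}(\mathbb U_{\mathfrak m}) : d(x,gx)<\varepsilon\}$. *)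

theory Defs
  imports "HOL-Analysis.Analysis"
begin

text \<open>Cardinals are represented by sets; card_of A is the cardinal of A.\<close>

text \<open>The cardinal hypothesis: for every cardinal n < m, m^n \<le> m
  (equivalently sup of m^n over n < m equals m, as m^1 = m).\<close>
definition cardinal_hyp :: "'m set \<Rightarrow> bool" where
  "cardinal_hyp M \<longleftrightarrow> infinite M \<and>
     (\<forall>N::'m set. (card_of N, card_of M) \<in> ordLess \<longrightarrow>
        (card_of (Func N M), card_of M) \<in> ordLeq)"

definition weight_le :: "'a metric \<Rightarrow> 'm set \<Rightarrow> bool" where
  "weight_le X M \<longleftrightarrow> (\<exists>B. (\<forall>b\<in>B. openin (mtopology_of X) b) \<and>
      (\<forall>W. openin (mtopology_of X) W \<longrightarrow> (\<exists>B'\<subseteq>B. \<Union>B' = W)) \<and>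
      (card_of B, card_of M) \<in> ordLeq)"

definition Iso :: "('a::metric_space \<Rightarrow> 'a) set" where
  "Iso = {g. bij g \<and> (\<forall>x y. dist (g x) (g y) = dist x y)}"

definition Vnb :: "'a::metric_space \<Rightarrow> real \<Rightarrow> ('a \<Rightarrow> 'a) set" where
  "Vnb x e = {g \<in> Iso. dist x (g x) < e}"

definition iso_subgroup :: "('a::metric_space \<Rightarrow> 'a) set \<Rightarrow> bool" where
  "iso_subgroup G \<longleftrightarrow> G \<subseteq> Iso \<and> id \<in> G \<and> (\<forall>g\<in>G. \<forall>h\<in>G. g \<circ> h \<in> G)
     \<and> (\<forall>g\<in>G. inv g \<in> G)"

text \<open>The type 'a (with its metric) is the Urysohn-Katetov space of weight m:
  complete, density exactly m, universal for metric spaces of weight \<le> m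
  (carried on subsets of 'a), and m-homogeneous.\<close>
definition urysohn_katetov :: "'m set \<Rightarrow> 'a::complete_space itself \<Rightarrow> bool" where
  "urysohn_katetov M _ \<longleftrightarrow>
     (\<exists>D::'a set. closure D = UNIV \<and> (card_of D, card_of M) \<in> ordIso) \<and>
     (\<forall>D::'a set. closure D = UNIV \<longrightarrow> (card_of M, card_of D) \<in> ordLeq) \<and>
     (\<forall>X::'a metric. weight_le X M \<longrightarrow>
        (\<exists>f::'a \<Rightarrow> 'a. \<forall>x\<in>mspace X. \<forall>y\<in>mspace X. dist (f x) (f y) = mdist X x y)) \<and>
     (\<forall>(A::'a set) (f::'a \<Rightarrow> 'a). (card_of A, card_of M) \<in> ordLess \<longrightarrow>
        (\<forall>x\<in>A. \<forall>y\<in>A. dist (f x) (f y) = dist x y) \<longrightarrow>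
        (\<exists>g\<in>Iso. \<forall>x\<in>A. g x = f x))"

end

theory Submission
  imports Defs
begin

(* The sets V[x;e] are open in the pointwise topology, so only the converse needs work:
   a basic neighbourhood {g. d(g y, y) < e for y in F}, F finite, must contain some
   V[x;d] intersected with G.  The idea is to choose a single point x whose distances to
   the points y_1, ..., y_n of F form a "staircase" C + i*gamma + d(z, y_i) (minimised
   over i); then an isometry moving x only slightly cannot permute or displace the y_i.
   Such an x exists by the extension property of U_m: a Katetov function on a set of
   cardinality < m is realised by a point (universality plus m-homogeneity).  It must be
   realised simultaneously on F and on its images under a dense subset D of G with
   |D| < m, which is where the density hypothesis enters. *)

unbundle cardinal_syntax

lemma finite_ordLess_infinite_card:
  assumes "finite A" "infinite C" shows "|A| <o |C|"
  using assms finite_ordLess_infinite[of "|A|" "|C|"]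
  by (simp add: Field_card_of card_of_well_order_on)

lemma finite_UN_ordLess_infinite:
  assumes "finite I" "infinite C" "\<forall>i\<in>I. |A i| <o |C|"
  shows "|\<Union>i\<in>I. A i| <o |C|"
  using assms
proof (induction I rule: finite_induct)
  case empty
  then show ?case using finite_ordLess_infinite_card[of "{}" C] by simp
next
  case (insert x I)
  then show ?case using card_of_Un_ordLess_infinite[of C "A x" "\<Union>i\<in>I. A i"] by simp
qed

text \<open>A (strictly positive) Katetov function on T: the prescribed distances from a
  new point to the points of T, compatible with the triangle inequality.  Positivity
  guarantees that the new point differs from every point of T.\<close>

definition katetov_fun :: "'a::metric_space set \<Rightarrow> ('a \<Rightarrow> real) \<Rightarrow> bool" where
  "katetov_fun T f \<longleftrightarrow> (\<forall>z\<in>T. f z > 0) \<and>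
     (\<forall>z\<in>T. \<forall>w\<in>T. f z \<le> f w + dist z w \<and> dist z w \<le> f z + f w)"

lemma one_point_extension_metric:
  fixes T :: "'a::metric_space set"
  assumes f: "katetov_fun T f" and p: "p \<notin> T"
  defines "d \<equiv> \<lambda>a b. if a = p then (if b = p then 0 else \<bar>f b\<bar>)
                     else if b = p then \<bar>f a\<bar> else dist a b"
  shows "Metric_space (insert p T) d"
proof
  have fabs: "\<And>z. z \<in> T \<Longrightarrow> \<bar>f z\<bar> = f z"
    using f by (force simp: katetov_fun_def)
  fix x y z
  show "0 \<le> d x y" by (auto simp: d_def)
  show "d x y = d y x" by (auto simp: d_def dist_commute)
  show "x \<in> insert p T \<Longrightarrow> y \<in> insert p T \<Longrightarrow> d x y = 0 \<longleftrightarrow> x = y"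
    using f p by (auto simp: d_def katetov_fun_def)
  show "x \<in> insert p T \<Longrightarrow> y \<in> insert p T \<Longrightarrow> z \<in> insert p T \<Longrightarrow> d x z \<le> d x y + d y z"
    using f p dist_triangle[of x z y] by (auto simp: d_def katetov_fun_def fabs dist_commute add.commute)
qed

lemma weight_le_small_metric:
  fixes M :: "'m set"
  assumes ms: "Metric_space S d" and small: "|S| \<le>o |M|" and inf: "infinite M"
  shows "weight_le (metric (S, d)) M"
proof -
  interpret Metric_space S d by (rule ms)
  define B where "B = (\<lambda>(a, n). mball a (1 / Suc n)) ` (S \<times> (UNIV::nat set))"
  have open_B: "\<forall>b\<in>B. openin mtopology b" by (auto simp: B_def)
  have base_B: "\<exists>B'\<subseteq>B. \<Union>B' = W" if W: "openin mtopology W" for W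
  proof (intro exI[of _ "{b\<in>B. b \<subseteq> W}"] conjI subset_antisym)
    show "W \<subseteq> \<Union>{b\<in>B. b \<subseteq> W}"
    proof
      fix x assume "x \<in> W"
      with W obtain r where r: "r > 0" "mball x r \<subseteq> W" "x \<in> S"
        unfolding openin_mtopology by blast
      obtain n :: nat where n: "inverse (real (Suc n)) < r" using reals_Archimedean r(1) by blast
      have "mball x (1 / Suc n) \<subseteq> W"
        using r n mball_subset_concentric[of "1 / Suc n" r x] by (simp add: inverse_eq_divide)
      moreover have "mball x (1 / Suc n) \<in> B" using r(3) by (auto simp: B_def)
      ultimately show "x \<in> \<Union>{b\<in>B. b \<subseteq> W}" using r(3) by auto
    qed
  qed blast+
  have "|B| \<le>o |S \<times> (UNIV::nat set)|" unfolding B_def by (rule card_of_image)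
  moreover have "|S \<times> (UNIV::nat set)| \<le>o |M|"
  proof (rule card_of_Times_ordLeq_infinite_Field)
    show "infinite (Field (card_of M))" using inf by (simp add: Field_card_of)
    show "|UNIV::nat set| \<le>o |M|" using inf infinite_iff_card_of_nat by blast
  qed (use small card_of_Card_order in auto)
  ultimately have "|B| \<le>o |M|" using ordLeq_transitive by blast
  then show ?thesis
    unfolding weight_le_def mtopology_of_def using open_B base_B by (simp add: Metric_space_axioms) blast
qed

text \<open>A set of cardinality < m cannot exhaust the space, whose density is m.\<close>

lemma urysohn_katetov_exists_outside:
  fixes M :: "'m set" and T :: "'a::complete_space set"
  assumes uk: "urysohn_katetov M TYPE('a)" and small: "|T| <o |M|"
  obtains p where "p \<notin> T"
proof -
  obtain D :: "'a set" where D: "|D| =o |M|" using uk unfolding urysohn_katetov_def by blast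
  have "T \<noteq> UNIV"
  proof
    assume "T = UNIV"
    then have "|D| <o |M|" using small card_of_mono1[of D T] ordLeq_ordLess_trans by blast
    then show False using D ordLess_ordIso_trans ordIso_symmetric ordLess_irreflexive by blast
  qed
  then show ?thesis using that by blast
qed

text \<open>Embed the one-point extension by universality and move the copy of T
  back onto T by m-homogeneity; the image of the new point realises f.\<close>

lemma katetov_point_exists:
  fixes M :: "'m set" and T :: "'a::complete_space set"
  assumes uk: "urysohn_katetov M TYPE('a)" and inf: "infinite M"
    and small: "|T| <o |M|" and f: "katetov_fun T f"
  obtains x where "\<forall>z\<in>T. dist x z = f z"
proof -
  obtain p where p: "p \<notin> T" using urysohn_katetov_exists_outside[OF uk small] by blast
  define d where "d a b = (if a = p then (if b = p then 0 else \<bar>f b\<bar>)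
                     else if b = p then \<bar>f a\<bar> else dist a b)" for a b
  have ms: "Metric_space (insert p T) d"
    unfolding d_def by (rule one_point_extension_metric[OF f p])
  have "|insert p T| <o |M|"
    using card_of_Un_ordLess_infinite[OF inf finite_ordLess_infinite_card[of "{p}" M] small] inf
    by simp
  then have "weight_le (metric (insert p T, d)) M"
    using weight_le_small_metric[OF ms] inf ordLess_imp_ordLeq by blast
  then obtain \<phi> :: "'a \<Rightarrow> 'a" where
    "\<forall>a\<in>mspace (metric (insert p T, d)). \<forall>b\<in>mspace (metric (insert p T, d)).
       dist (\<phi> a) (\<phi> b) = mdist (metric (insert p T, d)) a b"
    using uk unfolding urysohn_katetov_def by blast
  then have \<phi>: "\<forall>a\<in>insert p T. \<forall>b\<in>insert p T. dist (\<phi> a) (\<phi> b) = d a b"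
    using ms by (simp add: Metric_space.mspace_metric Metric_space.mdist_metric)
  have d_T: "d a b = dist a b" if "a \<in> T" "b \<in> T" for a b
    using that p by (auto simp: d_def)
  have inj: "inj_on \<phi> T"
    using \<phi> d_T by (intro inj_onI) (metis dist_eq_0_iff insertCI)
  define \<psi> where "\<psi> = inv_into T \<phi>"
  have \<psi>: "\<psi> (\<phi> z) = z" if "z \<in> T" for z
    unfolding \<psi>_def using inj that by simp
  have "|\<phi> ` T| <o |M|" using card_of_image small ordLeq_ordLess_trans by blast
  moreover have "\<forall>a\<in>\<phi> ` T. \<forall>b\<in>\<phi> ` T. dist (\<psi> a) (\<psi> b) = dist a b"
    using \<psi> \<phi> d_T by auto
  ultimately obtain g where g: "g \<in> Iso" "\<forall>a\<in>\<phi> ` T. g a = \<psi> a"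
    using uk unfolding urysohn_katetov_def by blast
  have "dist (g (\<phi> p)) z = f z" if z: "z \<in> T" for z
  proof -
    have "dist (g (\<phi> p)) z = dist (g (\<phi> p)) (g (\<phi> z))" using g(2) \<psi> z by simp
    also have "\<dots> = dist (\<phi> p) (\<phi> z)" using g(1) by (simp add: Iso_def)
    also have "\<dots> = d p z" using \<phi> z by simp
    also have "\<dots> = f z" using z p f by (auto simp: d_def katetov_fun_def)
    finally show ?thesis .
  qed
  then show ?thesis using that by blast
qed

text \<open>The distance profile of the pinning point: the minimum over i of
  C + i*gamma + d(z, y_i).  The steps i*gamma make the points y_i distinguishable.\<close>

definition stair :: "'a::metric_space list \<Rightarrow> real \<Rightarrow> real \<Rightarrow> 'a \<Rightarrow> real" where
  "stair ys C \<gamma> z = Min ((\<lambda>i. C + real i * \<gamma> + dist z (ys ! i)) ` {..<length ys})"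

lemma stair_le:
  assumes "i < length ys"
  shows "stair ys C \<gamma> z \<le> C + real i * \<gamma> + dist z (ys ! i)"
  unfolding stair_def using assms by (intro Min_le) auto

lemma stair_attained:
  assumes "ys \<noteq> []"
  obtains i where "i < length ys" "stair ys C \<gamma> z = C + real i * \<gamma> + dist z (ys ! i)"
proof -
  have "stair ys C \<gamma> z \<in> (\<lambda>i. C + real i * \<gamma> + dist z (ys ! i)) ` {..<length ys}"
    unfolding stair_def using assms by (intro Min_in) auto
  then show ?thesis using that by blast
qed

lemma stair_katetov:
  assumes "ys \<noteq> []" "C > 0" "\<gamma> \<ge> 0"
    and diam: "\<forall>a\<in>set ys. \<forall>b\<in>set ys. dist a b \<le> 2 * C"
  shows "katetov_fun T (stair ys C \<gamma>)"
  unfolding katetov_fun_def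
proof (intro conjI ballI)
  fix z w
  obtain i where i: "i < length ys" "stair ys C \<gamma> z = C + real i * \<gamma> + dist z (ys ! i)"
    using stair_attained[OF assms(1)] by blast
  obtain j where j: "j < length ys" "stair ys C \<gamma> w = C + real j * \<gamma> + dist w (ys ! j)"
    using stair_attained[OF assms(1)] by blast
  show "stair ys C \<gamma> z > 0"
    using i(2) assms(2,3) zero_le_dist[of z "ys ! i"] by (simp add: add_pos_nonneg)
  have "stair ys C \<gamma> z \<le> C + real j * \<gamma> + dist z (ys ! j)" by (rule stair_le[OF j(1)])
  then show "stair ys C \<gamma> z \<le> stair ys C \<gamma> w + dist z w"
    using j(2) dist_triangle[of z "ys ! j" w] by linarith
  have "dist (ys ! i) (ys ! j) \<le> 2 * C" using diam i(1) j(1) by simp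
  moreover have "dist z w \<le> dist z (ys ! i) + dist (ys ! i) w"
    and "dist (ys ! i) w \<le> dist (ys ! i) (ys ! j) + dist w (ys ! j)"
    using dist_triangle dist_triangle2 by blast+
  moreover have "0 \<le> real i * \<gamma>" "0 \<le> real j * \<gamma>" using assms(3) by simp_all
  ultimately show "dist z w \<le> stair ys C \<gamma> z + stair ys C \<gamma> w"
    using i(2) j(2) by linarith
qed

text \<open>By induction on i: the minimum defining stair (h y_i) can only be
  attained at index i, since larger indices are too expensive by the step gamma and
  smaller ones would force y_i and y_j to be closer than the separation allows.\<close>

lemma stair_point_pins_isometry:
  fixes ys :: "'a::metric_space list"
  assumes sep: "\<And>i j. i < length ys \<Longrightarrow> j < length ys \<Longrightarrow> i \<noteq> j \<Longrightarrow>
                   (real (length ys) + 1) * \<gamma> < dist (ys ! i) (ys ! j)"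
    and \<gamma>: "\<gamma> > 0" "4 * \<delta> \<le> \<gamma>"
    and iso: "\<And>a b. dist (h a) (h b) = dist a b"
    and x: "\<And>z. z \<in> set ys \<union> h ` set ys \<Longrightarrow> dist x z = stair ys C \<gamma> z"
    and hx: "dist x (h x) < 2 * \<delta>"
  shows "\<forall>y\<in>set ys. dist (h y) y < 2 * \<delta>"
proof -
  let ?c = "\<lambda>i. C + real i * \<gamma>"
  have "dist (h (ys ! i)) (ys ! i) < 2 * \<delta>" if "i < length ys" for i
    using that
  proof (induction i rule: less_induct)
    case (less i)
    define y where "y = ys ! i"
    have y: "y \<in> set ys" using less.prems by (simp add: y_def)
    have "stair ys C \<gamma> (h y) = dist x (h y)" using x y by simp
    also have "\<dots> \<le> dist x (h x) + dist (h x) (h y)" by (rule dist_triangle)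
    also have "dist (h x) (h y) = stair ys C \<gamma> y" using iso x y by simp
    also have "stair ys C \<gamma> y \<le> ?c i" using stair_le[OF less.prems, of C \<gamma> y] by (simp add: y_def)
    finally have close: "stair ys C \<gamma> (h y) < ?c i + 2 * \<delta>" using hx by linarith
    obtain j where j: "j < length ys" "stair ys C \<gamma> (h y) = ?c j + dist (h y) (ys ! j)"
      using stair_attained less.prems by (metis list.size(3) not_less0)
    consider "j = i" | "i < j" | "j < i" by linarith
    then show ?case
    proof cases
      case 1
      then show ?thesis using close j by (simp add: y_def)
    next
      case 2
      then have "real i * \<gamma> + \<gamma> \<le> real j * \<gamma>"
        using \<gamma>(1) mult_right_mono[of "real i + 1" "real j" \<gamma>] by (simp add: algebra_simps)
      moreover have "0 \<le> \<delta>" using hx zero_le_dist[of x "h x"] by linarith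
      ultimately show ?thesis using close j zero_le_dist[of "h y" "ys ! j"] \<gamma>(2) by linarith
    next
      case 3
      have IH: "dist (h (ys ! j)) (ys ! j) < 2 * \<delta>" using less.IH[OF 3 j(1)] .
      have "dist y (ys ! j) = dist (h y) (h (ys ! j))" by (simp add: iso)
      also have "\<dots> \<le> dist (h y) (ys ! j) + dist (h (ys ! j)) (ys ! j)" by (rule dist_triangle2)
      finally have "dist y (ys ! j) < (real i - real j) * \<gamma> + 4 * \<delta>"
        using close j IH by (simp add: algebra_simps)
      moreover have "(real i - real j) * \<gamma> \<le> real (length ys) * \<gamma>"
        using less.prems \<gamma>(1) by (intro mult_right_mono) auto
      moreover have "(real (length ys) + 1) * \<gamma> < dist y (ys ! j)"
        using sep[OF less.prems j(1)] 3 by (simp add: y_def)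
      ultimately show ?thesis using \<gamma>(2) by (simp add: algebra_simps)
    qed
  qed
  then show ?thesis by (metis in_set_conv_nth)
qed

lemma stair_parameters:
  fixes ys :: "'a::metric_space list"
  assumes "distinct ys"
  obtains \<gamma> C where "\<gamma> > 0" "C > 0"
    "\<And>i j. i < length ys \<Longrightarrow> j < length ys \<Longrightarrow> i \<noteq> j \<Longrightarrow>
       (real (length ys) + 1) * \<gamma> < dist (ys ! i) (ys ! j)"
    "\<forall>a\<in>set ys. \<forall>b\<in>set ys. dist a b \<le> 2 * C"
proof -
  define P where "P = (\<lambda>(a, b). dist a b) ` {(a, b) \<in> set ys \<times> set ys. a \<noteq> b}"
  define \<mu> where "\<mu> = Min (insert 1 P)"
  have finP: "finite P" unfolding P_def by (rule finite_imageI) (auto intro: finite_subset)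
  have \<mu>_pos: "\<mu> > 0" unfolding \<mu>_def using finP by (auto simp: Min_gr_iff P_def)
  have \<mu>_le: "\<mu> \<le> dist a b" if "a \<in> set ys" "b \<in> set ys" "a \<noteq> b" for a b
    unfolding \<mu>_def using finP that by (intro Min_le) (auto simp: P_def)
  define \<gamma> where "\<gamma> = \<mu> / (real (length ys) + 2)"
  have \<gamma>_pos: "\<gamma> > 0" using \<mu>_pos by (simp add: \<gamma>_def)
  have "(real (length ys) + 1) * \<gamma> < \<mu>"
  proof -
    have "\<mu> = (real (length ys) + 2) * \<gamma>" by (simp add: \<gamma>_def)
    then show ?thesis using \<gamma>_pos by (simp add: algebra_simps)
  qed
  moreover have "ys ! i \<noteq> ys ! j" if "i < length ys" "j < length ys" "i \<noteq> j" for i j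
    using assms that by (simp add: nth_eq_iff_index_eq)
  ultimately have sep: "(real (length ys) + 1) * \<gamma> < dist (ys ! i) (ys ! j)"
    if "i < length ys" "j < length ys" "i \<noteq> j" for i j
    using \<mu>_le that by (meson less_le_trans nth_mem)
  obtain e where e: "\<forall>a\<in>set ys. \<forall>b\<in>set ys. dist a b \<le> e"
    using bounded_two_points finite_imp_bounded by blast
  have "\<forall>a\<in>set ys. \<forall>b\<in>set ys. dist a b \<le> 2 * max 1 e" using e by force
  moreover have "max 1 e > 0" by simp
  ultimately show ?thesis using that[OF \<gamma>_pos _ sep] by blast
qed

lemma open_evaluation_ball: "open {f :: 'a::metric_space \<Rightarrow> 'a. f x \<in> ball y e}"
  using product_topology_basis'[of "{x}" "\<lambda>_. ball y e" id] by simp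

lemma basic_pointwise_nbhd:
  fixes G :: "('a::metric_space \<Rightarrow> 'a) set"
  assumes "openin (top_of_set G) W" "id \<in> W"
  obtains F \<epsilon> where "finite F" "\<epsilon> > 0" "\<forall>g\<in>G. (\<forall>y\<in>F. dist (g y) y < \<epsilon>) \<longrightarrow> g \<in> W"
proof -
  obtain U where U: "open U" "W = G \<inter> U" using assms(1) by (auto simp: openin_open)
  then have "id \<in> U" using assms by auto
  with U(1) obtain V where V: "finite {i. V i \<noteq> UNIV}" "\<forall>i. open (V i)"
      "id \<in> PiE UNIV V" "PiE UNIV V \<subseteq> U"
    unfolding open_fun_def openin_product_topology_alt by force
  define F where "F = {i. V i \<noteq> UNIV}"
  have "\<exists>e>0. ball i e \<subseteq> V i" for i
    using V(2,3) open_contains_ball by (metis PiE_E UNIV_I id_apply)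
  then obtain r where r: "\<And>i. r i > 0 \<and> ball i (r i) \<subseteq> V i" by metis
  define \<epsilon> where "\<epsilon> = Min (insert 1 (r ` F))"
  have fin: "finite (insert 1 (r ` F))" using V(1) by (simp add: F_def)
  have \<epsilon>_pos: "\<epsilon> > 0" unfolding \<epsilon>_def using fin r by (auto simp: Min_gr_iff)
  have \<epsilon>_le: "\<epsilon> \<le> r i" if "i \<in> F" for i unfolding \<epsilon>_def using fin that by (intro Min_le) auto
  have "g \<in> W" if g: "g \<in> G" "\<forall>y\<in>F. dist (g y) y < \<epsilon>" for g
  proof -
    have "g i \<in> V i" for i
    proof (cases "i \<in> F")
      case True
      then have "g i \<in> ball i (r i)" using g(2) \<epsilon>_le by (fastforce simp: dist_commute)
      then show ?thesis using r by blast
    qed (simp add: F_def)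
    then have "g \<in> PiE UNIV V" by (simp add: PiE_UNIV_domain)
    then show "g \<in> W" using V(4) U(2) g(1) by auto
  qed
  then show ?thesis using that V(1) \<epsilon>_pos by (simp add: F_def)
qed

lemma closure_pointwise_approx:
  fixes g :: "'a::metric_space \<Rightarrow> 'a"
  assumes "g \<in> closure D" "finite F" "\<delta> > 0"
  obtains h where "h \<in> D" "\<forall>y\<in>F. dist (h y) (g y) < \<delta>"
proof -
  define N where "N = {f. \<forall>i\<in>F. f (id i) \<in> ball (g i) \<delta>}"
  have "open N" unfolding N_def by (rule product_topology_basis') (auto simp: assms)
  moreover have "g \<in> N" using assms by (auto simp: N_def)
  ultimately have "N \<inter> D \<noteq> {}" using assms(1) open_Int_closure_eq_empty by blast
  then show ?thesis using that by (auto simp: N_def dist_commute)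
qed

text \<open>Take x realising the staircase function on F and on the D-orbits of F; a map g close to
  the identity at x is approximated on x and F by some h in D, to which the key
  estimate applies.\<close>

lemma small_isometry_set_pinned:
  fixes M :: "'m set" and D :: "('a::complete_space \<Rightarrow> 'a) set"
  assumes uk: "urysohn_katetov M TYPE('a)" and inf: "infinite M"
    and D: "D \<subseteq> Iso" "|D| <o |M|" and F: "finite F" and \<epsilon>: "\<epsilon> > 0"
  obtains x \<delta> where "\<delta> > 0"
    "\<forall>g\<in>closure D. dist x (g x) < \<delta> \<longrightarrow> (\<forall>y\<in>F. dist (g y) y < \<epsilon>)"
proof -
  obtain ys where ys: "distinct ys" "set ys = F" using finite_distinct_list[OF F] by blast
  obtain \<gamma> C where \<gamma>: "\<gamma> > 0" and C: "C > 0"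
    and sep: "\<And>i j. i < length ys \<Longrightarrow> j < length ys \<Longrightarrow> i \<noteq> j \<Longrightarrow>
                 (real (length ys) + 1) * \<gamma> < dist (ys ! i) (ys ! j)"
    and diam: "\<forall>a\<in>set ys. \<forall>b\<in>set ys. dist a b \<le> 2 * C"
    using stair_parameters[OF ys(1)] by blast
  define T where "T = (\<Union>y\<in>F. (\<lambda>h. h y) ` D) \<union> F"
  have "|T| <o |M|" unfolding T_def
  proof (rule card_of_Un_ordLess_infinite[OF inf])
    show "|\<Union>y\<in>F. (\<lambda>h. h y) ` D| <o |M|"
      using F inf D(2) card_of_image ordLeq_ordLess_trans
      by (intro finite_UN_ordLess_infinite) blast+
    show "|F| <o |M|" by (rule finite_ordLess_infinite_card[OF F inf])
  qed
  show ?thesis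
  proof (cases "ys = []")
    case True
    then show ?thesis using that[of 1] ys(2) by simp
  next
    case False
    then have "katetov_fun T (stair ys C \<gamma>)"
      using C \<gamma> diam by (intro stair_katetov) auto
    then obtain x where x: "\<forall>z\<in>T. dist x z = stair ys C \<gamma> z"
      using katetov_point_exists[OF uk inf \<open>|T| <o |M|\<close>] by blast
    define \<delta> where "\<delta> = min (\<gamma> / 4) (\<epsilon> / 3)"
    have "\<forall>y\<in>F. dist (g y) y < \<epsilon>" if g: "g \<in> closure D" "dist x (g x) < \<delta>" for g
    proof -
      have \<delta>_pos: "\<delta> > 0" using \<gamma> \<epsilon> by (simp add: \<delta>_def)
      obtain h where h: "h \<in> D" "\<forall>y\<in>insert x F. dist (h y) (g y) < \<delta>"
        using closure_pointwise_approx[OF g(1) _ \<delta>_pos, of "insert x F"] F by blast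
      have iso: "\<And>a b. dist (h a) (h b) = dist a b" using h(1) D(1) by (auto simp: Iso_def)
      have hx: "dist x (h x) < 2 * \<delta>"
        using g(2) h(2) dist_triangle[of x "h x" "g x"] by (simp add: dist_commute)
      have "set ys \<union> h ` set ys \<subseteq> T" using ys(2) h(1) by (auto simp: T_def)
      then have x_stair: "\<And>z. z \<in> set ys \<union> h ` set ys \<Longrightarrow> dist x z = stair ys C \<gamma> z"
        using x by blast
      have "4 * \<delta> \<le> \<gamma>" by (simp add: \<delta>_def)
      then have pinned: "\<forall>y\<in>F. dist (h y) y < 2 * \<delta>"
        using stair_point_pins_isometry[OF sep \<gamma> _ iso x_stair hx] ys(2) by blast
      show ?thesis
      proof
        fix y assume y: "y \<in> F"
        have "dist (g y) y \<le> dist (h y) (g y) + dist (h y) y" by (rule dist_triangle3)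
        then show "dist (g y) y < \<epsilon>" using h(2) pinned y by (force simp: \<delta>_def)
      qed
    qed
    then show ?thesis using that[of "min (\<gamma> / 4) (\<epsilon> / 3)" x] \<gamma> \<epsilon> by (simp add: \<delta>_def)
  qed
qed

theorem lemma4p4p1:
  fixes M :: "'m set" and G :: "('a::complete_space \<Rightarrow> 'a) set"
  assumes "cardinal_hyp M"
    and "urysohn_katetov M TYPE('a)"
    and "iso_subgroup G"
    and "\<exists>D\<subseteq>G. G \<subseteq> closure D \<and> (card_of D, card_of M) \<in> ordLess"
  shows "(\<forall>x e. e > 0 \<longrightarrow>
            (\<exists>W. openin (top_of_set G) W \<and> id \<in> W \<and> W \<subseteq> Vnb x e \<inter> G))
       \<and> (\<forall>W. openin (top_of_set G) W \<and> id \<in> W \<longrightarrow>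
            (\<exists>x e. e > 0 \<and> Vnb x e \<inter> G \<subseteq> W))"
proof (intro conjI allI impI; (elim conjE)?)
  have G: "G \<subseteq> Iso" "id \<in> G" using assms(3) by (simp_all add: iso_subgroup_def)
  fix x :: 'a and e :: real assume "e > 0"
  then show "\<exists>W. openin (top_of_set G) W \<and> id \<in> W \<and> W \<subseteq> Vnb x e \<inter> G"
    using G open_evaluation_ball[of x x e]
    by (intro exI[of _ "G \<inter> {f. f x \<in> ball x e}"]) (auto simp: openin_open_Int Vnb_def)
next
  fix W assume W: "openin (top_of_set G) W" "id \<in> W"
  obtain F \<epsilon> where F: "finite F" "\<epsilon> > 0" and FW: "\<forall>g\<in>G. (\<forall>y\<in>F. dist (g y) y < \<epsilon>) \<longrightarrow> g \<in> W"
    using basic_pointwise_nbhd[OF W] by blast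
  obtain D where D: "D \<subseteq> G" "G \<subseteq> closure D" "|D| <o |M|" using assms(4) by blast
  have "D \<subseteq> Iso" "infinite M"
    using D(1) assms(1,3) by (auto simp: iso_subgroup_def cardinal_hyp_def)
  then obtain x \<delta> where "\<delta> > 0"
      "\<forall>g\<in>closure D. dist x (g x) < \<delta> \<longrightarrow> (\<forall>y\<in>F. dist (g y) y < \<epsilon>)"
    using small_isometry_set_pinned[OF assms(2) _ _ D(3) F] by metis
  then show "\<exists>x e. e > 0 \<and> Vnb x e \<inter> G \<subseteq> W"
    using D(2) FW by (intro exI[of _ x] exI[of _ \<delta>]) (auto simp: Vnb_def)
qed

end
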